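(* Let $L,M,N\in\mathbb N$, let $\vec B_1$ be a binary digit vector of length (scale factor) $N^L$ and $\vec B_2$ a binary digit vector of length $N^M$. If $\vec B_1\otimes\vec B_2=\vec B_2\otimes\vec B_1$, then $F_{\vec B_1}=F_{\vec B_2}$.
   Context: A binary digit vector of length (scale factor) $K\ge3$ is $\vec B=(b_0,\dots,b_{K-1})\in\{0,1\}^K$ with $2\le\|\vec B\|:=\sum_i b_i\le K-1$; its digit set is $D=\{i:b_i=1\}$. With $\phi_d(x)=(x+d)/K$ for $d\in D$, let $\mu_{\vec B}$ be the unique Borel probability measure with $\mu_{\vec B}=\frac{1}{\|\vec B\|}\sum_{d\in D}\mu_{\vec B}\circ\phi_d^{-1}$, supported on the attractor $C_{\vec B}\subset[0,1]$; the CDF is $F_{\vec B}(x)=\mu_{\vec B}([0,x])$. For binary vectors $\vec B=(b_0,\dots,b_{P-1})$ and $\vec C=(c_0,\dots,c_{Q-1})$, the Kronecker product $\vec B\otimes\vec C$ is the vector of length $PQ$ with $(\vec B\otimes\vec C)(n+mQ)=b_mc_n$ for $0\le n\le Q-1$, $0\le m\le P-1$. *)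

theory Defs
  imports "HOL-Probability.Probability"
begin

definition is_bdv :: "nat list \<Rightarrow> bool" where
  "is_bdv B \<longleftrightarrow> length B \<ge> 3 \<and> set B \<subseteq> {0, 1} \<and>
     2 \<le> sum_list B \<and> sum_list B \<le> length B - 1"

definition digits :: "nat list \<Rightarrow> nat set" where
  "digits B = {i. i < length B \<and> B ! i = 1}"

definition phi :: "nat \<Rightarrow> nat \<Rightarrow> real \<Rightarrow> real" where
  "phi K d x = (x + real d) / real K"

definition bdv_measure :: "nat list \<Rightarrow> real measure" where
  "bdv_measure B = (THE M. prob_space M \<and> sets M = sets borel \<and>
     (\<forall>A\<in>sets borel. measure M A =
        (\<Sum>d\<in>digits B. measure M (phi (length B) d -` A)) / real (sum_list B)))"

definition bdv_cdf :: "nat list \<Rightarrow> real \<Rightarrow> real" where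
  "bdv_cdf B x = measure (bdv_measure B) {0..x}"

definition kron :: "nat list \<Rightarrow> nat list \<Rightarrow> nat list" where
  "kron B C = map (\<lambda>i. B ! (i div length C) * C ! (i mod length C))
                  [0..<length B * length C]"

end

(*
  Let T_B = hutchinson B act on real functions by (T_B F)(t) = (1/||B||) * sum over d in D
  of F(K t - d).
  The self-similarity equation says exactly that F_B is a fixed point of T_B, and F_B is the
  only fixed point among functions with values in [0,1] tending to 0 at -oo and to 1 at +oo:
  the difference D of two such fixed points satisfies D(s) = mean over d of D(K s - d) and
  vanishes at infinity. If m = sup |D| were positive, iterating a branch y |-> K y - d, away
  from its repelling fixed point, would carry a point where |D| is nearly m off to infinity,
  while the deficit m - |D| grows at most by the factor #D per step; this contradicts D -> 0.
  (Existence of mu_B, which gives meaning to the THE in its definition, comes from the law of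
  a random K-ary expansion whose digits are independent and uniform on D.)

  The digits of B (x) C are the numbers m |C| + n, so T_(B (x) C) = T_B o T_C, and the
  hypothesis B1 (x) B2 = B2 (x) B1 makes T_B1 and T_B2 commute. Hence T_B2 F_B1 is a second
  fixed point of T_B1, so it equals F_B1; thus F_B1 is also fixed by T_B2 and equals F_B2.
*)

theory Submission
  imports Defs
begin

section \<open>Digit vectors and Kronecker products\<close>

lemma finite_digits [simp]: "finite (digits B)"
  unfolding digits_def by auto

lemma digits_less_length: "d \<in> digits B \<Longrightarrow> d < length B"
  unfolding digits_def by auto

lemma sum_list_eq_card_digits:
  assumes "set B \<subseteq> {0, 1}"
  shows "sum_list B = card (digits B)"
proof -
  have "sum_list B = (\<Sum>i<length B. B ! i)"
    by (simp add: sum_list_sum_nth atLeast0LessThan)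
  also have "\<dots> = (\<Sum>i<length B. if B ! i = 1 then 1 else 0)"
  proof (rule sum.cong)
    fix i assume "i \<in> {..<length B}"
    then have "B ! i \<in> {0, 1}" using assms nth_mem by fastforce
    then show "B ! i = (if B ! i = 1 then 1 else 0)" by auto
  qed simp
  also have "\<dots> = card ({..<length B} \<inter> {i. B ! i = 1})"
    by (simp add: sum.If_cases)
  also have "{..<length B} \<inter> {i. B ! i = 1} = digits B"
    by (auto simp: digits_def)
  finally show ?thesis .
qed

lemma is_bdv_sum_list: "is_bdv B \<Longrightarrow> sum_list B = card (digits B)"
  by (simp add: is_bdv_def sum_list_eq_card_digits)

lemma is_bdv_card_digits:
  assumes "is_bdv B"
  shows "2 \<le> card (digits B)"
  using assms is_bdv_sum_list[OF assms] unfolding is_bdv_def by linarith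

lemma length_kron [simp]: "length (kron B C) = length B * length C"
  by (simp add: kron_def)

lemma set_kron_01:
  assumes "set B \<subseteq> {0, 1}" and "set C \<subseteq> {0, 1}"
  shows "set (kron B C) \<subseteq> {0, 1}"
proof
  fix z assume "z \<in> set (kron B C)"
  then obtain i where i: "i < length B * length C"
    and z: "z = B ! (i div length C) * C ! (i mod length C)"
    by (auto simp: kron_def)
  from i have "length C > 0" by (cases "length C") auto
  with i have "B ! (i div length C) \<in> set B" "C ! (i mod length C) \<in> set C"
    by (simp_all add: less_mult_imp_div_less)
  with assms z show "z \<in> {0, 1}" by auto
qed

lemma mixed_radix_div_mod:
  fixes m n Q :: nat
  assumes "n < Q"
  shows "(m * Q + n) div Q = m" and "(m * Q + n) mod Q = n"
  using assms by simp_all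

lemma mixed_radix_less:
  fixes m n P Q :: nat
  assumes "m < P" "n < Q"
  shows "m * Q + n < P * Q"
proof -
  have "m * Q + n < Suc m * Q" using assms(2) by simp
  also have "\<dots> \<le> P * Q" using assms(1) by (intro mult_right_mono) auto
  finally show ?thesis .
qed

lemma digits_kron:
  "digits (kron B C) = (\<lambda>(m, n). m * length C + n) ` (digits B \<times> digits C)"
proof (intro set_eqI iffI)
  fix i assume "i \<in> digits (kron B C)"
  then have i: "i < length B * length C" "B ! (i div length C) * C ! (i mod length C) = 1"
    by (auto simp: digits_def kron_def)
  from i(1) have "length C > 0" by (cases "length C") auto
  with i(1) have "i div length C < length B" "i mod length C < length C"
    by (simp_all add: less_mult_imp_div_less)
  with i(2) have "(i div length C, i mod length C) \<in> digits B \<times> digits C"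
    by (simp add: digits_def)
  then show "i \<in> (\<lambda>(m, n). m * length C + n) ` (digits B \<times> digits C)"
    by (rule rev_image_eqI) simp
next
  fix i assume "i \<in> (\<lambda>(m, n). m * length C + n) ` (digits B \<times> digits C)"
  then obtain m n where mn: "m < length B" "B ! m = 1" "n < length C" "C ! n = 1"
    and "i = m * length C + n"
    by (auto simp: digits_def)
  then show "i \<in> digits (kron B C)"
    by (simp add: digits_def kron_def mixed_radix_div_mod mixed_radix_less)
qed

lemma inj_on_mixed_radix:
  fixes Q :: nat
  shows "inj_on (\<lambda>(m, n). m * Q + n) (M \<times> {..<Q})"
proof (rule inj_onI, clarify)
  fix m n m' n' assume "n < Q" "n' < Q" "m * Q + n = m' * Q + n'"
  then show "m = m' \<and> n = n'"
    by (metis mixed_radix_div_mod)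
qed

lemma inj_on_digits_kron:
  "inj_on (\<lambda>(m, n). m * length C + n) (digits B \<times> digits C)"
  by (rule inj_on_subset[OF inj_on_mixed_radix]) (auto dest: digits_less_length)

lemma card_digits_kron: "card (digits (kron B C)) = card (digits B) * card (digits C)"
  by (simp add: digits_kron card_image[OF inj_on_digits_kron] card_cartesian_product)

lemma sum_list_kron:
  assumes "set B \<subseteq> {0, 1}" and "set C \<subseteq> {0, 1}"
  shows "sum_list (kron B C) = sum_list B * sum_list C"
  using sum_list_eq_card_digits[OF set_kron_01[OF assms]] assms
  by (simp add: sum_list_eq_card_digits card_digits_kron)

lemma sum_digits_kron:
  "(\<Sum>i\<in>digits (kron B C). f i) = (\<Sum>m\<in>digits B. \<Sum>n\<in>digits C. f (m * length C + n))"
  by (simp add: digits_kron sum.reindex[OF inj_on_digits_kron] sum.cartesian_product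
      prod.case_distrib)

section \<open>The refinement equation\<close>

lemma refinement_deficit_step:
  fixes D :: "real \<Rightarrow> real" and S :: "real set"
  assumes "finite S" and "d \<in> S"
    and refine: "\<And>s. D s = (\<Sum>e\<in>S. D (K * s - e)) / card S"
    and bound: "\<And>s. \<bar>D s\<bar> \<le> m"
  shows "m - \<bar>D (K * y - d)\<bar> \<le> card S * (m - \<bar>D y\<bar>)"
proof -
  have "card S > 0" using assms(1,2) by (auto simp: card_gt_0_iff)
  have "D y = (D (K * y - d) + (\<Sum>e\<in>S - {d}. D (K * y - e))) / card S"
    using refine[of y] assms(1,2) by (simp add: sum.remove)
  with \<open>card S > 0\<close> have "card S * D y = D (K * y - d) + (\<Sum>e\<in>S - {d}. D (K * y - e))"
    by simp
  then have "card S * \<bar>D y\<bar> \<le> \<bar>D (K * y - d)\<bar> + \<bar>\<Sum>e\<in>S - {d}. D (K * y - e)\<bar>"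
    by (metis abs_mult abs_of_nat abs_triangle_ineq)
  moreover have "\<bar>\<Sum>e\<in>S - {d}. D (K * y - e)\<bar> \<le> (\<Sum>e\<in>S - {d}. \<bar>D (K * y - e)\<bar>)"
    by (rule sum_abs)
  also have "\<dots> \<le> (card S - 1) * m"
    using sum_mono[of "S - {d}" _ "\<lambda>_. m", OF bound] assms(1,2)
    by (simp add: card_Diff_singleton)
  ultimately show ?thesis
    using \<open>card S > 0\<close> by (simp add: of_nat_diff algebra_simps)
qed

lemma refinement_deficit_orbit:
  fixes D :: "real \<Rightarrow> real" and S :: "real set"
  assumes "finite S" and "d \<in> S"
    and refine: "\<And>s. D s = (\<Sum>e\<in>S. D (K * s - e)) / card S"
    and bound: "\<And>s. \<bar>D s\<bar> \<le> m"
    and fixpoint: "K * p - d = p"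
  shows "m - \<bar>D (p + K ^ j * (t - p))\<bar> \<le> card S ^ j * (m - \<bar>D t\<bar>)"
proof (induction j)
  case 0
  show ?case by simp
next
  case (Suc j)
  have "p + K ^ Suc j * (t - p) = K * (p + K ^ j * (t - p)) - d"
    using fixpoint by (simp add: algebra_simps)
  then have "m - \<bar>D (p + K ^ Suc j * (t - p))\<bar> \<le> card S * (m - \<bar>D (p + K ^ j * (t - p))\<bar>)"
    using refinement_deficit_step[OF assms(1-4)] by simp
  also have "\<dots> \<le> card S * (card S ^ j * (m - \<bar>D t\<bar>))"
    using Suc.IH by (rule mult_left_mono) simp
  finally show ?case by simp
qed

lemma vanishing_refinement_solution_eq_0:
  fixes D :: "real \<Rightarrow> real" and S :: "real set" and K :: real
  assumes "1 < K" and "2 \<le> card S"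
    and refine: "\<And>s. D s = (\<Sum>d\<in>S. D (K * s - d)) / card S"
    and "bounded (range D)" and "(D \<longlongrightarrow> 0) at_infinity"
  shows "D x = 0"
proof (rule ccontr)
  assume "D x \<noteq> 0"
  have "finite S" using assms(2) by (metis card.infinite not_numeral_le_zero)
  obtain d1 d2 where d12: "d1 \<in> S" "d2 \<in> S" "d1 \<noteq> d2"
    using obtain_subset_with_card_n[OF assms(2)] by (metis card_2_iff insert_subset)
  define m where "m = (SUP s. \<bar>D s\<bar>)"
  have bdd: "bdd_above (range (\<lambda>s. \<bar>D s\<bar>))"
    using \<open>bounded (range D)\<close> by (auto simp: bounded_iff bdd_above_def)
  have le_m: "\<bar>D s\<bar> \<le> m" for s
    unfolding m_def by (rule cSUP_upper[OF _ bdd]) simp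
  have "m > 0" using le_m[of x] \<open>D x \<noteq> 0\<close> by linarith
  obtain R where far: "\<And>s. R \<le> \<bar>s\<bar> \<Longrightarrow> \<bar>D s\<bar> < m / 2"
    using tendstoD[OF assms(5), of "m / 2"] \<open>m > 0\<close> by (auto simp: eventually_at_infinity)
  \<comment> \<open>the branch y \<mapsto> K y - d has the repelling fixed point d / (K - 1)\<close>
  define p1 p2 where "p1 = d1 / (K - 1)" and "p2 = d2 / (K - 1)"
  define c where "c = \<bar>p2 - p1\<bar> / 2"
  have "c > 0" using d12(3) \<open>1 < K\<close> by (simp add: c_def p1_def p2_def)
  obtain k where k: "R + \<bar>p1\<bar> + \<bar>p2\<bar> < K ^ k * c"
    using real_arch_pow[OF \<open>1 < K\<close>] \<open>c > 0\<close> by (metis pos_divide_less_eq mult.commute)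
  have "m - m / (2 * card S ^ k) < m"
    using \<open>m > 0\<close> assms(2) by simp
  then obtain t where t: "m - m / (2 * card S ^ k) < \<bar>D t\<bar>"
    unfolding m_def using less_cSUP_iff[OF _ bdd] by auto
  obtain d where d: "d \<in> {d1, d2}" and far_t: "c \<le> \<bar>t - d / (K - 1)\<bar>"
  proof (cases "c \<le> \<bar>t - p1\<bar>")
    case False
    then have "c \<le> \<bar>t - p2\<bar>"
      unfolding c_def by (simp add: abs_real_def split: if_splits)
    then show ?thesis using that[of d2] by (simp add: p2_def)
  qed (use that[of d1] in \<open>simp add: p1_def\<close>)
  define p where "p = d / (K - 1)"
  have "K * p - d = p" using \<open>1 < K\<close> by (simp add: p_def field_simps)
  then have "m - \<bar>D (p + K ^ k * (t - p))\<bar> \<le> card S ^ k * (m - \<bar>D t\<bar>)"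
    using refinement_deficit_orbit[OF \<open>finite S\<close> _ refine le_m] d d12 by blast
  also have "\<dots> < m / 2"
    using t assms(2) by (simp add: field_simps)
  finally have "m / 2 < \<bar>D (p + K ^ k * (t - p))\<bar>" by simp
  moreover have "R \<le> \<bar>p + K ^ k * (t - p)\<bar>"
  proof -
    have "\<bar>p\<bar> \<le> \<bar>p1\<bar> + \<bar>p2\<bar>" using d by (auto simp: p_def p1_def p2_def)
    moreover have "K ^ k * c \<le> K ^ k * \<bar>t - p\<bar>"
      using far_t \<open>1 < K\<close> by (simp add: p_def)
    moreover have "K ^ k * \<bar>t - p\<bar> \<le> \<bar>p + K ^ k * (t - p)\<bar> + \<bar>p\<bar>"
      using abs_triangle_ineq4[of "p + K ^ k * (t - p)" p] \<open>1 < K\<close> by (simp add: abs_mult)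
    ultimately show ?thesis using k by linarith
  qed
  ultimately show False using far by fastforce
qed
section \<open>The self-similarity operator on distribution functions\<close>

definition hutchinson :: "nat list \<Rightarrow> (real \<Rightarrow> real) \<Rightarrow> real \<Rightarrow> real" where
  "hutchinson B F t =
     (\<Sum>d\<in>digits B. F (real (length B) * t - real d)) / real (sum_list B)"

lemma hutchinson_kron:
  assumes "set B \<subseteq> {0, 1}" and "set C \<subseteq> {0, 1}"
  shows "hutchinson (kron B C) F = hutchinson B (hutchinson C F)"
proof
  fix t
  let ?P = "length B" and ?Q = "length C"
  have "(\<Sum>i\<in>digits (kron B C). F (real (?P * ?Q) * t - real i))
      = (\<Sum>m\<in>digits B. \<Sum>n\<in>digits C. F (real ?Q * (real ?P * t - real m) - real n))"
    by (simp add: sum_digits_kron algebra_simps)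
  then show "hutchinson (kron B C) F t = hutchinson B (hutchinson C F) t"
    by (simp add: hutchinson_def sum_list_kron[OF assms] sum_divide_distrib[symmetric] divide_divide_eq_left
        mult.commute)
qed
lemma hutchinson_diff:
  "hutchinson B (\<lambda>x. F x - G x) t = hutchinson B F t - hutchinson B G t"
  unfolding hutchinson_def by (simp add: sum_subtractf diff_divide_distrib)

lemma hutchinson_real_digits:
  assumes "is_bdv B"
  shows "hutchinson B F t =
    (\<Sum>d\<in>real ` digits B. F (real (length B) * t - d)) / card (real ` digits B)"
  using assms by (simp add: hutchinson_def is_bdv_sum_list sum.reindex card_image)

lemma hutchinson_commute:
  assumes "is_bdv B" and "is_bdv C" and "kron B C = kron C B"
  shows "hutchinson B (hutchinson C F) = hutchinson C (hutchinson B F)"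
  using assms hutchinson_kron[of B C F] hutchinson_kron[of C B F] by (simp add: is_bdv_def)

lemma tendsto_hutchinson:
  assumes "is_bdv B" and "(F \<longlongrightarrow> a) L"
    and "\<And>d. filterlim (\<lambda>t. real (length B) * t - d) L L"
  shows "(hutchinson B F \<longlongrightarrow> a) L"
proof -
  have "real (sum_list B) \<noteq> 0"
    using is_bdv_card_digits[OF assms(1)] is_bdv_sum_list[OF assms(1)] by auto
  then have "((\<lambda>t. (\<Sum>d\<in>digits B. F (real (length B) * t - real d)) / real (sum_list B))
      \<longlongrightarrow> (\<Sum>d\<in>digits B. a) / real (sum_list B)) L"
    by (intro tendsto_intros filterlim_compose[OF assms(2) assms(3)])
  moreover have "(\<Sum>d\<in>digits B. a) / real (sum_list B) = a"
    using is_bdv_card_digits[OF assms(1)] by (auto simp: is_bdv_sum_list[OF assms(1)])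
  ultimately show ?thesis
    unfolding hutchinson_def[abs_def] by simp
qed

lemma filterlim_affine_at_top:
  fixes c :: real
  assumes "0 < c"
  shows "filterlim (\<lambda>t. c * t - d) at_top at_top"
  unfolding filterlim_at_top eventually_at_top_linorder
proof
  fix z
  show "\<exists>t0. \<forall>t\<ge>t0. z \<le> c * t - d"
    using assms by (intro exI[of _ "(z + d) / c"]) (auto simp: field_simps)
qed

lemma filterlim_affine_at_bot:
  fixes c :: real
  assumes "0 < c"
  shows "filterlim (\<lambda>t. c * t - d) at_bot at_bot"
  unfolding filterlim_at_bot eventually_at_bot_linorder
proof
  fix z
  show "\<exists>t0. \<forall>t\<le>t0. c * t - d \<le> z"
    using assms by (intro exI[of _ "(z + d) / c"]) (auto simp: field_simps)
qed

definition cdf_like :: "(real \<Rightarrow> real) \<Rightarrow> bool" where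
  "cdf_like F \<longleftrightarrow> (\<forall>x. 0 \<le> F x \<and> F x \<le> 1) \<and> (F \<longlongrightarrow> 0) at_bot \<and> (F \<longlongrightarrow> 1) at_top"

lemma (in real_distribution) cdf_like_cdf: "cdf_like (cdf M)"
  by (simp add: cdf_like_def cdf_nonneg cdf_bounded_prob cdf_lim_at_bot cdf_lim_at_top_prob)

lemma cdf_like_hutchinson:
  assumes "is_bdv B" and "cdf_like F"
  shows "cdf_like (hutchinson B F)"
proof -
  have K: "0 < real (length B)" using assms(1) by (auto simp: is_bdv_def)
  have "0 \<le> hutchinson B F t \<and> hutchinson B F t \<le> 1" for t
  proof -
    have "(\<Sum>d\<in>digits B. F (real (length B) * t - real d)) \<le> (\<Sum>d\<in>digits B. 1)"
      by (rule sum_mono) (use assms(2) in \<open>simp add: cdf_like_def\<close>)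
    moreover have "0 \<le> (\<Sum>d\<in>digits B. F (real (length B) * t - real d))"
      using assms(2) by (simp add: cdf_like_def sum_nonneg)
    ultimately show ?thesis
      using is_bdv_card_digits[OF assms(1)]
      by (simp add: hutchinson_def is_bdv_sum_list[OF assms(1)])
  qed
  moreover have "(hutchinson B F \<longlongrightarrow> 0) at_bot" "(hutchinson B F \<longlongrightarrow> 1) at_top"
    using assms by (auto simp: cdf_like_def intro!: tendsto_hutchinson
        filterlim_affine_at_bot[OF K] filterlim_affine_at_top[OF K])
  ultimately show ?thesis
    by (simp add: cdf_like_def)
qed

lemma hutchinson_fixpoint_unique:
  assumes B: "is_bdv B" and "cdf_like F" and "cdf_like G"
    and "hutchinson B F = F" and "hutchinson B G = G"
  shows "F = G"
proof
  fix x
  have "F x - G x = 0"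
  proof (rule vanishing_refinement_solution_eq_0[where D = "\<lambda>s. F s - G s"])
    show "1 < real (length B)" using B by (simp add: is_bdv_def)
    show "2 \<le> card (real ` digits B)"
      using is_bdv_card_digits[OF B] by (simp add: card_image)
    show "F s - G s = (\<Sum>d\<in>real ` digits B. F (real (length B) * s - d) - G (real (length B) * s - d))
        / card (real ` digits B)" for s
      using hutchinson_diff[of B F G s] assms(4,5) by (simp add: hutchinson_real_digits[OF B])
    have "\<bar>F s - G s\<bar> \<le> 1" for s
    proof -
      have "0 \<le> F s" "F s \<le> 1" "0 \<le> G s" "G s \<le> 1"
        using \<open>cdf_like F\<close> \<open>cdf_like G\<close> by (simp_all add: cdf_like_def)
      then show ?thesis by (simp add: abs_le_iff)
    qed
    then show "bounded (range (\<lambda>s. F s - G s))"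
      by (auto intro!: boundedI)
    show "((\<lambda>s. F s - G s) \<longlongrightarrow> 0) at_infinity"
      using \<open>cdf_like F\<close> \<open>cdf_like G\<close>
      by (auto simp: cdf_like_def at_infinity_eq_at_top_bot
          intro!: filterlim_sup tendsto_eq_intros)
  qed
  then show "F x = G x" by simp
qed
section \<open>Self-similar measures\<close>

definition self_similar :: "nat list \<Rightarrow> real measure \<Rightarrow> bool" where
  "self_similar B M \<longleftrightarrow> prob_space M \<and> sets M = sets borel \<and>
     (\<forall>A\<in>sets borel. measure M A =
        (\<Sum>d\<in>digits B. measure M (phi (length B) d -` A)) / real (sum_list B))"

lemma bdv_measure_eq_The: "bdv_measure B = (THE M. self_similar B M)"
  unfolding bdv_measure_def self_similar_def ..

lemma self_similar_real_distribution: "self_similar B M \<Longrightarrow> real_distribution M"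
  unfolding self_similar_def real_distribution_def real_distribution_axioms_def by auto

lemma hutchinson_cdf:
  assumes "0 < length B" and "self_similar B M"
  shows "hutchinson B (cdf M) = cdf M"
proof
  fix t
  have "phi (length B) d -` {..t} = {..real (length B) * t - real d}" for d
    using assms(1) by (auto simp: phi_def field_simps)
  then show "hutchinson B (cdf M) t = cdf M t"
    using assms(2) by (simp add: self_similar_def hutchinson_def cdf_def)
qed

lemma self_similar_unique:
  assumes "is_bdv B" and "self_similar B M" and "self_similar B M'"
  shows "M = M'"
proof -
  have "0 < length B" using assms(1) by (auto simp: is_bdv_def)
  note dist = self_similar_real_distribution[OF assms(2)] self_similar_real_distribution[OF assms(3)]
  have "cdf M = cdf M'"
    using assms(1) real_distribution.cdf_like_cdf[OF dist(1)] real_distribution.cdf_like_cdf[OF dist(2)]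
      hutchinson_cdf[OF \<open>0 < length B\<close> assms(2)] hutchinson_cdf[OF \<open>0 < length B\<close> assms(3)]
    by (rule hutchinson_fixpoint_unique)
  then show ?thesis by (rule cdf_unique[OF dist])
qed

\<comment> \<open>Truncating the digits at K makes the series converge for every stream; on streams of
  digits below K it is the usual K-ary expansion.\<close>
definition radix_expansion :: "nat \<Rightarrow> nat stream \<Rightarrow> real" where
  "radix_expansion K \<omega> = (\<Sum>j. real (min (\<omega> !! j) K) / real K ^ Suc j)"

lemma summable_radix_expansion:
  assumes "2 \<le> K"
  shows "summable (\<lambda>j. real (min (\<omega> !! j) K) / real K ^ Suc j)"
proof (rule summable_comparison_test')
  show "summable (\<lambda>j. (1 / real K) ^ j)"
    using assms by (intro summable_geometric) simp
  fix j
  have "real (min (\<omega> !! j) K) / real K ^ Suc j \<le> real K / real K ^ Suc j"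
    using assms by (intro divide_right_mono) auto
  also have "\<dots> = (1 / real K) ^ j"
    using assms by (simp add: power_one_over)
  finally show "norm (real (min (\<omega> !! j) K) / real K ^ Suc j) \<le> (1 / real K) ^ j"
    by simp
qed

lemma radix_expansion_SCons:
  assumes "2 \<le> K" and "d < K"
  shows "radix_expansion K (d ## \<omega>) = phi K d (radix_expansion K \<omega>)"
proof -
  let ?a = "\<lambda>\<omega> j. real (min (\<omega> !! j) K) / real K ^ Suc j"
  have "radix_expansion K (d ## \<omega>) = ?a (d ## \<omega>) 0 + (\<Sum>j. ?a (d ## \<omega>) (Suc j))"
    using suminf_split_head[OF summable_radix_expansion[OF assms(1)], of "d ## \<omega>"]
    unfolding radix_expansion_def by linarith
  also have "(\<lambda>j. ?a (d ## \<omega>) (Suc j)) = (\<lambda>j. ?a \<omega> j / real K)"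
    by (simp add: ac_simps)
  also have "(\<Sum>j. ?a \<omega> j / real K) = radix_expansion K \<omega> / real K"
    unfolding radix_expansion_def by (rule suminf_divide[OF summable_radix_expansion[OF assms(1)]])
  finally show ?thesis
    using assms(2) by (simp add: phi_def add_divide_distrib)
qed

lemma measurable_radix_expansion [measurable]:
  "radix_expansion K \<in> borel_measurable (stream_space (measure_pmf p))"
  unfolding radix_expansion_def[abs_def] by measurable

lemma borel_measurable_phi [measurable]: "phi K d \<in> borel_measurable borel"
  unfolding phi_def by measurable

lemma emeasure_distr_radix_expansion:
  fixes D :: "nat set"
  assumes "finite D" and "D \<noteq> {}" and "\<forall>d\<in>D. d < K" and "2 \<le> K" and "A \<in> sets borel"
  defines "\<mu> \<equiv> distr (stream_space (measure_pmf (pmf_of_set D))) borel (radix_expansion K)"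
  shows "emeasure \<mu> A = (\<Sum>d\<in>D. emeasure \<mu> (phi K d -` A)) / card D"
proof -
  let ?S = "stream_space (measure_pmf (pmf_of_set D))"
  have emeasure_\<mu>: "emeasure \<mu> B = (\<integral>\<^sup>+\<omega>. indicator B (radix_expansion K \<omega>) \<partial>?S)"
    if "B \<in> sets borel" for B
    using that by (simp add: \<mu>_def nn_integral_distr flip: nn_integral_indicator)
  have phi_sets: "phi K d -` A \<in> sets borel" for d
    using measurable_sets[OF borel_measurable_phi assms(5)] by simp
  have "emeasure \<mu> A = (\<integral>\<^sup>+d. (\<integral>\<^sup>+\<omega>. indicator A (radix_expansion K (d ## \<omega>)) \<partial>?S)
      \<partial>measure_pmf (pmf_of_set D))"
    unfolding emeasure_\<mu>[OF assms(5)] using assms(5)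
    by (subst prob_space.nn_integral_stream_space[OF measure_pmf.prob_space_axioms]) auto
  also have "\<dots> = (\<Sum>d\<in>D. \<integral>\<^sup>+\<omega>. indicator A (radix_expansion K (d ## \<omega>)) \<partial>?S) / card D"
    by (rule nn_integral_pmf_of_set[OF assms(2,1)])
  also have "\<dots> = (\<Sum>d\<in>D. emeasure \<mu> (phi K d -` A)) / card D"
    using assms(3,4) by (simp add: emeasure_\<mu> phi_sets radix_expansion_SCons indicator_def)
  finally show ?thesis .
qed

lemma self_similar_exists:
  assumes "is_bdv B"
  shows "\<exists>M. self_similar B M"
proof -
  let ?K = "length B" and ?D = "digits B"
  define \<mu> where "\<mu> = distr (stream_space (measure_pmf (pmf_of_set ?D))) borel (radix_expansion ?K)"
  have K: "2 \<le> ?K" using assms by (simp add: is_bdv_def)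
  have D: "?D \<noteq> {}" using is_bdv_card_digits[OF assms] by auto
  interpret prob_space \<mu>
    unfolding \<mu>_def
    by (intro prob_space.prob_space_distr prob_space.prob_space_stream_space
        measure_pmf.prob_space_axioms measurable_radix_expansion)
  have "measure \<mu> A = (\<Sum>d\<in>?D. measure \<mu> (phi ?K d -` A)) / real (sum_list B)"
    if "A \<in> sets borel" for A
  proof -
    have "ennreal (measure \<mu> A) = ennreal (\<Sum>d\<in>?D. measure \<mu> (phi ?K d -` A)) / ennreal (card ?D)"
      using emeasure_distr_radix_expansion[OF finite_digits D _ K that, folded \<mu>_def]
      by (simp add: digits_less_length emeasure_eq_measure ennreal_of_nat_eq_real_of_nat)
    also have "\<dots> = ennreal ((\<Sum>d\<in>?D. measure \<mu> (phi ?K d -` A)) / card ?D)"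
      using D by (intro divide_ennreal) (auto intro: sum_nonneg simp: card_gt_0_iff)
    finally show ?thesis
      by (simp add: is_bdv_sum_list[OF assms] ennreal_inj sum_nonneg)
  qed
  moreover have "sets \<mu> = sets borel" by (simp add: \<mu>_def)
  ultimately have "self_similar B \<mu>"
    by (simp add: self_similar_def prob_space_axioms)
  then show ?thesis ..
qed

lemma self_similar_bdv_measure: "is_bdv B \<Longrightarrow> self_similar B (bdv_measure B)"
  unfolding bdv_measure_eq_The
  by (rule theI') (use self_similar_exists self_similar_unique in blast)

theorem lemma2p8:
  fixes L M N :: nat and B1 B2 :: "nat list"
  assumes "is_bdv B1" and "length B1 = N ^ L"
    and "is_bdv B2" and "length B2 = N ^ M"
    and "kron B1 B2 = kron B2 B1"
  shows "bdv_cdf B1 = bdv_cdf B2"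
proof -
  let ?F1 = "cdf (bdv_measure B1)" and ?F2 = "cdf (bdv_measure B2)"
  have ss1: "self_similar B1 (bdv_measure B1)" and ss2: "self_similar B2 (bdv_measure B2)"
    using assms(1,3) by (simp_all add: self_similar_bdv_measure)
  note dist = ss1[THEN self_similar_real_distribution] ss2[THEN self_similar_real_distribution]
  have F1: "cdf_like ?F1" and F2: "cdf_like ?F2"
    using dist by (simp_all add: real_distribution.cdf_like_cdf)
  have "0 < length B1" "0 < length B2"
    using assms(1,3) by (auto simp: is_bdv_def)
  then have fix1: "hutchinson B1 ?F1 = ?F1" and fix2: "hutchinson B2 ?F2 = ?F2"
    using ss1 ss2 by (simp_all add: hutchinson_cdf)
  have "hutchinson B1 (hutchinson B2 ?F1) = hutchinson B2 ?F1"
    using hutchinson_commute[OF assms(1,3,5)] fix1 by metis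
  then have "hutchinson B2 ?F1 = ?F1"
    using hutchinson_fixpoint_unique[OF assms(1) cdf_like_hutchinson[OF assms(3) F1] F1 _ fix1]
    by blast
  then have "?F1 = ?F2"
    using hutchinson_fixpoint_unique[OF assms(3) F1 F2 _ fix2] by blast
  then have "bdv_measure B1 = bdv_measure B2"
    by (rule cdf_unique[OF dist])
  then show ?thesis
    by (simp add: bdv_cdf_def fun_eq_iff)
qed

end
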